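(* Let $\varepsilon\in\{0,-1\}$, $\delta\in\{-1,0,1\}$ and $\phi_1,\phi_2,\phi_3\in\mathring I_\delta$. Then $$\mathcal{M}_{\varepsilon,\delta}(\phi_1,\phi_2,\phi_3)=\{(r_1,r_2,r_3)\in(J_{\varepsilon\delta})^3:\ (r_i,r_j)\in\mathcal{D}_{\varepsilon,\delta}(\phi_k)\text{ for all }\{i,j,k\}=\{1,2,3\}\}.$$
   Context: Generalized hyperbolic triangles (in $\mathbb{H}^2$) are convex regions bounded by three geodesics $L_1,L_2,L_3$ (forming a Euclidean triangle in the Klein model) truncated by common perpendiculars at vertices outside $\overline{\mathbb{H}^2}$, with horodisks at ideal vertices; a generalized vertex has type $1$ (in $\mathbb{H}^2$), $0$ (ideal) or $-1$ (hyperideal). Generalized angle: interior angle (type 1), twice the horocyclic arc length between the sides (type 0), distance between the two sides (type $-1$). Generalized edge length between generalized vertices $u,v$: with $B_u$ the point, the horodisk, or the half-plane beyond the truncating perpendicular, it is $d(B_u,B_v)$ if these are disjoint and minus the distance between the points where $\partial B_u,\partial B_v$ meet the side otherwise. Type $(-1,-1,-1)$ triangles are right-angled hexagons, type $(0,0,0)$ are decorated ideal triangles. $\mathring I_\delta=\mathbb{R}_{>0}$ for $\delta\in\{0,-1\}$, $(0,\pi)$ for $\delta=1$; $J_\sigma=\mathbb{R}_{>0}$ for $\sigma=\pm1$, $J_0=\mathbb{R}$. For $\theta\in\mathring I_\delta$, $\mathcal{D}_{\varepsilon,\delta}(\theta)$ is the set of $(a,b)\in(J_{\varepsilon\delta})^2$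 such that there is a generalized triangle of type $(\varepsilon,\varepsilon,\delta)$ whose two sides at the type-$\delta$ vertex have lengths $a,b$ and whose generalized angle there is $\theta$. For $(r_i,r_j)\in\mathcal{D}_{\varepsilon,\delta}(\phi_k)$ let $l_k$ be the generalized length of the third side of this (unique up to isometry) triangle. Then $\mathcal{M}_{\varepsilon,\delta}(\phi_1,\phi_2,\phi_3)$ is the set of $(r_1,r_2,r_3)\in(J_{\varepsilon\delta})^3$ such that, for each $\{i,j,k\}=\{1,2,3\}$, $l_k$ is defined, and there exists a generalized triangle of type $(\varepsilon,\varepsilon,\varepsilon)$ with edge lengths $l_1,l_2,l_3$. *)

theory Defs
  imports "HOL-Analysis.Analysis"
begin

text \<open>The hyperbolic plane is the upper sheet of the hyperboloid
  lor x x = -1.  The Klein model is the affine chart x3 = 1 (projective points with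
  positive third coordinate); a point p of the Klein plane lifts to the ray through (p,1).\<close>

type_synonym v3 = "real \<times> real \<times> real"

fun lor :: "v3 \<Rightarrow> v3 \<Rightarrow> real" where
  "lor (a, b, c) (d, e, f) = a * d + b * e - c * f"

fun thd :: "v3 \<Rightarrow> real" where
  "thd (a, b, c) = c"

fun det3 :: "v3 \<Rightarrow> v3 \<Rightarrow> v3 \<Rightarrow> real" where
  "det3 (a1, a2, a3) (b1, b2, b3) (c1, c2, c3) =
     a1 * (b2 * c3 - b3 * c2) - a2 * (b1 * c3 - b3 * c1) + a3 * (b1 * c2 - b2 * c1)"

definition hyp :: "v3 set" where
  "hyp = {x. lor x x = -1 \<and> thd x > 0}"

definition hdist :: "v3 \<Rightarrow> v3 \<Rightarrow> real" where
  "hdist x y = arcosh (- lor x y)"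

definition hsetdist :: "v3 set \<Rightarrow> v3 set \<Rightarrow> real" where
  "hsetdist A B = Inf {hdist x y | x y. x \<in> A \<and> y \<in> B}"

definition hline :: "v3 \<Rightarrow> v3 \<Rightarrow> v3 set" where
  "hline U W = {x \<in> hyp. \<exists>a b. x = a *\<^sub>R U + b *\<^sub>R W}"

text \<open>The part of H^2 on the Euclidean segment [U,W] of the Klein model.\<close>
definition hseg :: "v3 \<Rightarrow> v3 \<Rightarrow> v3 set" where
  "hseg U W = {x \<in> hyp. \<exists>a b. a \<ge> 0 \<and> b \<ge> 0 \<and> x = a *\<^sub>R U + b *\<^sub>R W}"

text \<open>A generalized vertex of type t is represented by a vector V with thd V > 0
  (a point of the Klein chart):
  type 1: V is a point of H^2 (lor V V = -1);
  type 0: V is future light-like (lor V V = 0); the ideal point is the ray of V and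
          the scale of V encodes the horodisk {x. - lor x V \<le> 1};
  type -1: V is space-like with lor V V = 1 (a hyperideal point of the Klein chart);
          the truncating perpendicular is its polar line {x. lor x V = 0}, and
          B_V is the half-plane beyond it (on the side of the hyperideal point).\<close>

definition vtx_ok :: "int \<Rightarrow> v3 \<Rightarrow> bool" where
  "vtx_ok t V = (thd V > 0 \<and>
     (if t = 1 then lor V V = -1 else if t = 0 then lor V V = 0 else t = -1 \<and> lor V V = 1))"

definition Bset :: "int \<Rightarrow> v3 \<Rightarrow> v3 set" where
  "Bset t V = (if t = 1 then {V} else if t = 0 then {x \<in> hyp. - lor x V \<le> 1}
               else {x \<in> hyp. lor x V \<ge> 0})"

definition Bbdry :: "int \<Rightarrow> v3 \<Rightarrow> v3 set" where
  "Bbdry t V = (if t = 1 then {V} else if t = 0 then {x \<in> hyp. - lor x V = 1}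
               else {x \<in> hyp. lor x V = 0})"

text \<open>Generalized triangle of type (t1,t2,t3) with generalized vertices V1,V2,V3:
  the vertices form a non-degenerate Euclidean triangle in the Klein model, each side
  of this Euclidean triangle passes through H^2 (so it lies on a geodesic L_i), and the
  truncations B at non-ideal vertices are pairwise disjoint (so that the region bounded
  by the geodesics and the truncating perpendiculars is a genuine generalized
  triangle; horodisks may overlap anything).\<close>
definition gtri :: "int \<Rightarrow> int \<Rightarrow> int \<Rightarrow> v3 \<Rightarrow> v3 \<Rightarrow> v3 \<Rightarrow> bool" where
  "gtri t1 t2 t3 V1 V2 V3 =
     (vtx_ok t1 V1 \<and> vtx_ok t2 V2 \<and> vtx_ok t3 V3 \<and> det3 V1 V2 V3 \<noteq> 0 \<and>
      hseg V1 V2 \<noteq> {} \<and> hseg V2 V3 \<noteq> {} \<and> hseg V1 V3 \<noteq> {} \<and>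
      (t1 \<noteq> 0 \<and> t2 \<noteq> 0 \<longrightarrow> Bset t1 V1 \<inter> Bset t2 V2 = {}) \<and>
      (t2 \<noteq> 0 \<and> t3 \<noteq> 0 \<longrightarrow> Bset t2 V2 \<inter> Bset t3 V3 = {}) \<and>
      (t1 \<noteq> 0 \<and> t3 \<noteq> 0 \<longrightarrow> Bset t1 V1 \<inter> Bset t3 V3 = {}))"

definition glen :: "int \<Rightarrow> v3 \<Rightarrow> int \<Rightarrow> v3 \<Rightarrow> real" where
  "glen t U s W =
     (if Bset t U \<inter> Bset s W = {} then hsetdist (Bset t U) (Bset s W)
      else - hdist (THE x. x \<in> Bbdry t U \<inter> hline U W) (THE y. y \<in> Bbdry s W \<inter> hline U W))"

text \<open>Generalized angle at the vertex (t,V) between the sides towards W1 and W2.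
  type 1: Riemannian angle between the tangent vectors at V of the two sides;
  type 0: twice the horocyclic arc length (on the boundary horocycle of the horodisk)
          between the two sides; the horocyclic arc between two points of a horocycle at
          hyperbolic distance d has length 2 sinh(d/2);
  type -1: the distance between the two sides.\<close>
definition gangle :: "int \<Rightarrow> v3 \<Rightarrow> v3 \<Rightarrow> v3 \<Rightarrow> real" where
  "gangle t V W1 W2 =
     (if t = 1 then
        (let T1 = W1 + lor W1 V *\<^sub>R V; T2 = W2 + lor W2 V *\<^sub>R V
         in arccos (lor T1 T2 / sqrt (lor T1 T1 * lor T2 T2)))
      else if t = 0 then
        (let X1 = (THE x. x \<in> Bbdry 0 V \<inter> hline V W1);
             X2 = (THE x. x \<in> Bbdry 0 V \<inter> hline V W2)
         in 2 * (2 * sinh (hdist X1 X2 / 2)))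
      else hsetdist (hline V W1) (hline V W2))"

definition Iint :: "int \<Rightarrow> real set" where
  "Iint d = (if d = 1 then {0<..<pi} else {0<..})"

definition Jset :: "int \<Rightarrow> real set" where
  "Jset s = (if s = 0 then UNIV else {0<..})"

definition tri_data :: "int \<Rightarrow> int \<Rightarrow> real \<Rightarrow> real \<Rightarrow> real \<Rightarrow> real \<Rightarrow> bool" where
  "tri_data e d th a b l = (\<exists>V1 V2 V3. gtri e e d V1 V2 V3 \<and>
      glen e V1 d V3 = a \<and> glen e V2 d V3 = b \<and> gangle d V3 V1 V2 = th \<and>
      glen e V1 e V2 = l)"

definition Dset :: "int \<Rightarrow> int \<Rightarrow> real \<Rightarrow> (real \<times> real) set" where
  "Dset e d th = {(a, b). a \<in> Jset (e * d) \<and> b \<in> Jset (e * d) \<and>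
      (\<exists>V1 V2 V3. gtri e e d V1 V2 V3 \<and>
         glen e V1 d V3 = a \<and> glen e V2 d V3 = b \<and> gangle d V3 V1 V2 = th)}"

definition third_side :: "int \<Rightarrow> int \<Rightarrow> real \<Rightarrow> real \<Rightarrow> real \<Rightarrow> real \<Rightarrow> bool" where
  "third_side e d th a b l = ((a, b) \<in> Dset e d th \<and> tri_data e d th a b l)"

definition Mset :: "int \<Rightarrow> int \<Rightarrow> real \<Rightarrow> real \<Rightarrow> real \<Rightarrow> (real \<times> real \<times> real) set" where
  "Mset e d p1 p2 p3 = {(r1, r2, r3).
      r1 \<in> Jset (e * d) \<and> r2 \<in> Jset (e * d) \<and> r3 \<in> Jset (e * d) \<and>
      (\<exists>l1 l2 l3.
         third_side e d p1 r2 r3 l1 \<and> third_side e d p1 r3 r2 l1 \<and>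
         third_side e d p2 r1 r3 l2 \<and> third_side e d p2 r3 r1 l2 \<and>
         third_side e d p3 r1 r2 l3 \<and> third_side e d p3 r2 r1 l3 \<and>
         (\<exists>U1 U2 U3. gtri e e e U1 U2 U3 \<and>
            glen e U2 e U3 = l1 \<and> glen e U1 e U3 = l2 \<and> glen e U1 e U2 = l3))}"

end

theory Submission
  imports Defs
begin

text \<open>
  For
  the converse, each condition \<open>(r\<^sub>i, r\<^sub>j) \<in> D(\<phi>\<^sub>k)\<close> provides a triangle whose third
  side joins two vertices \<open>V, W\<close> of type e; its generalized length \<open>l\<^sub>k\<close> serves for both
  orders of \<open>r\<^sub>i, r\<^sub>j\<close>.  The key fact is that such a side is determined up to isometry
  by the single number \<open>lor V W\<close>: two pairs with the same Lorentz products are related by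
  the linear map between their adapted orthonormal frames, and this map preserves the
  hyperboloid, horodisks, half-planes, lines and distances, hence generalized lengths
  and admissibility.  Finally any three products \<open>c\<^sub>k < -qv e\<close> are realized by an explicit
  triple of vertices \<open>U\<^sub>1, U\<^sub>2, U\<^sub>3\<close>, which therefore form a triangle of type (e,e,e)
  with edge lengths \<open>l\<^sub>1, l\<^sub>2, l\<^sub>3\<close>.
\<close>

lemma lor_sym: "lor x y = lor y x"
  by (cases x rule: prod_cases3; cases y rule: prod_cases3) (simp add: algebra_simps)

lemma lor_add_l: "lor (x + y) z = lor x z + lor y z"
  and lor_add_r: "lor z (x + y) = lor z x + lor z y"
  and lor_diff_l: "lor (x - y) z = lor x z - lor y z"
  and lor_diff_r: "lor z (x - y) = lor z x - lor z y"
  and lor_scale_l: "lor (a *\<^sub>R x) z = a * lor x z"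
  and lor_scale_r: "lor z (a *\<^sub>R x) = a * lor z x"
  by (cases x rule: prod_cases3; cases y rule: prod_cases3; cases z rule: prod_cases3;
      simp add: algebra_simps)+

lemmas lor_lin = lor_add_l lor_add_r lor_diff_l lor_diff_r lor_scale_l lor_scale_r

lemma thd_add: "thd (x + y) = thd x + thd y"
  and thd_scale: "thd (a *\<^sub>R x) = a * thd x"
  by (cases x rule: prod_cases3; cases y rule: prod_cases3; simp)+

lemma lor_comb:
  "lor (a *\<^sub>R V + b *\<^sub>R W) (a *\<^sub>R V + b *\<^sub>R W) = a^2 * lor V V + b^2 * lor W W + 2*a*b * lor V W"
  by (simp add: lor_lin lor_sym[of W V] power2_eq_square algebra_simps)

section \<open>Time-like vectors: the reverse Cauchy--Schwarz inequality\<close>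

text \<open>The Euclidean Cauchy--Schwarz inequality in the space-like coordinates shows that two
  time-like vectors have Lorentz product of the sign opposite to the product of their time
  components.\<close>

lemma timelike_inner_bound:
  fixes a b c d e f :: real
  assumes "c^2 > a^2 + b^2" "f^2 > d^2 + e^2"
  shows "\<bar>a*d + b*e\<bar> < \<bar>c\<bar> * \<bar>f\<bar>"
proof -
  have "(a^2+b^2)*(d^2+e^2) - (a*d+b*e)^2 = (a*e-b*d)^2" by algebra
  then have "(a*d+b*e)^2 \<le> (a^2+b^2)*(d^2+e^2)" by (metis diff_ge_0_iff_ge zero_le_power2)
  also have "\<dots> < c^2 * f^2"
    using assms by (intro mult_strict_mono') (auto intro: add_nonneg_nonneg)
  finally have "(a*d+b*e)^2 < (\<bar>c\<bar>*\<bar>f\<bar>)^2" by (simp add: power_mult_distrib)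
  then show ?thesis
    by (metis abs_ge_zero abs_mult abs_power2 power2_abs power_less_imp_less_base zero_le_mult_iff)
qed

lemma timelike_lor_sign:
  assumes "lor y y < 0" "lor z z < 0"
  shows "lor y z < 0 \<longleftrightarrow> (thd y > 0 \<longleftrightarrow> thd z > 0)"
proof -
  obtain a b c where y: "y = (a,b,c)" by (cases y rule: prod_cases3)
  obtain d e f where z: "z = (d,e,f)" by (cases z rule: prod_cases3)
  have cf: "c^2 > a^2+b^2" "f^2 > d^2+e^2" using assms y z by (auto simp: power2_eq_square)
  then have "c \<noteq> 0" "f \<noteq> 0"
    by (metis add_nonneg_nonneg not_less power_zero_numeral zero_le_power2)+
  with timelike_inner_bound[OF cf] show ?thesis
    using y z by (auto simp: abs_if split: if_splits)
qed

lemma hyp_lor_neg: "x \<in> hyp \<Longrightarrow> z \<in> hyp \<Longrightarrow> lor x z < 0"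
  unfolding hyp_def using timelike_lor_sign[of x z] by auto

text \<open>A vector Lorentz-orthogonal to a basis vanishes (Cramer's rule).\<close>

lemma lor_nondegenerate:
  assumes "lor r a = 0" "lor r b = 0" "lor r c = 0" "det3 a b c \<noteq> 0"
  shows "r = 0"
proof -
  obtain a1 a2 a3 where a: "a = (a1,a2,a3)" by (cases a rule: prod_cases3)
  obtain b1 b2 b3 where b: "b = (b1,b2,b3)" by (cases b rule: prod_cases3)
  obtain c1 c2 c3 where c: "c = (c1,c2,c3)" by (cases c rule: prod_cases3)
  obtain r1 r2 r3 where r: "r = (r1,r2,r3)" by (cases r rule: prod_cases3)
  let ?d = "det3 a b c"
  have "?d * r1 = lor r a * (b2*c3-b3*c2) + lor r b * (c2*a3-c3*a2) + lor r c * (a2*b3-a3*b2)"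
    "?d * r2 = lor r a * (b3*c1-b1*c3) + lor r b * (c3*a1-c1*a3) + lor r c * (a3*b1-a1*b3)"
    "?d * (-r3) = lor r a * (b1*c2-b2*c1) + lor r b * (c1*a2-c2*a1) + lor r c * (a1*b2-a2*b1)"
    unfolding a b c r by (simp; algebra)+
  then show ?thesis using assms r by (simp add: zero_prod_def)
qed

lemma gram_det:
  "(det3 a b c)^2 = - (lor a a * (lor b b * lor c c - lor b c ^2)
      - lor a b * (lor a b * lor c c - lor b c * lor a c)
      + lor a c * (lor a b * lor b c - lor b b * lor a c))"
proof -
  obtain a1 a2 a3 where a: "a = (a1,a2,a3)" by (cases a rule: prod_cases3)
  obtain b1 b2 b3 where b: "b = (b1,b2,b3)" by (cases b rule: prod_cases3)
  obtain c1 c2 c3 where c: "c = (c1,c2,c3)" by (cases c rule: prod_cases3)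
  show ?thesis unfolding a b c by simp algebra
qed

section \<open>Orthonormal frames\<close>

definition ONF :: "v3 \<Rightarrow> v3 \<Rightarrow> v3 \<Rightarrow> bool" where
  "ONF f0 f1 f2 = (lor f0 f0 = -1 \<and> lor f1 f1 = 1 \<and> lor f2 f2 = 1 \<and> lor f0 f1 = 0 \<and> lor f0 f2 = 0
     \<and> lor f1 f2 = 0 \<and> thd f0 > 0)"

lemma ONF_lor:
  assumes "ONF f0 f1 f2"
  shows "lor f0 f0 = -1" "lor f1 f1 = 1" "lor f2 f2 = 1" "lor f0 f1 = 0" "lor f0 f2 = 0"
    "lor f1 f2 = 0" "lor f1 f0 = 0" "lor f2 f0 = 0" "lor f2 f1 = 0" "thd f0 > 0"
  using assms unfolding ONF_def by (auto simp: lor_sym)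

lemma ONF_expansion:
  assumes "ONF f0 f1 f2"
  shows "x = lor x f1 *\<^sub>R f1 + lor x f2 *\<^sub>R f2 - lor x f0 *\<^sub>R f0"
proof -
  let ?r = "x - (lor x f1 *\<^sub>R f1 + lor x f2 *\<^sub>R f2 - lor x f0 *\<^sub>R f0)"
  note o = ONF_lor[OF assms]
  have "(det3 f0 f1 f2)^2 = 1" unfolding gram_det using o by simp
  then have "det3 f0 f1 f2 \<noteq> 0" by auto
  moreover have "lor ?r f0 = 0" "lor ?r f1 = 0" "lor ?r f2 = 0"
    by (simp_all add: lor_lin o)
  ultimately have "?r = 0" using lor_nondegenerate by blast
  then show ?thesis by simp
qed

definition frame_map :: "v3 \<Rightarrow> v3 \<Rightarrow> v3 \<Rightarrow> v3 \<Rightarrow> v3 \<Rightarrow> v3 \<Rightarrow> v3 \<Rightarrow> v3" where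
  "frame_map g0 g1 g2 h0 h1 h2 x = lor x g1 *\<^sub>R h1 + lor x g2 *\<^sub>R h2 - lor x g0 *\<^sub>R h0"

lemma frame_map_lor:
  assumes g: "ONF g0 g1 g2" and h: "ONF h0 h1 h2"
  shows "lor (frame_map g0 g1 g2 h0 h1 h2 x) (frame_map g0 g1 g2 h0 h1 h2 y) = lor x y"
proof -
  have "lor x y = lor (lor x g1 *\<^sub>R g1 + lor x g2 *\<^sub>R g2 - lor x g0 *\<^sub>R g0) y"
    using ONF_expansion[OF g, of x] by simp
  also have "\<dots> = lor x g1 * lor y g1 + lor x g2 * lor y g2 - lor x g0 * lor y g0"
    by (simp add: lor_lin lor_sym[of y])
  also have "\<dots> = lor (frame_map g0 g1 g2 h0 h1 h2 x) (frame_map g0 g1 g2 h0 h1 h2 y)"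
    unfolding frame_map_def by (simp add: lor_lin ONF_lor[OF h])
  finally show ?thesis by simp
qed

lemma frame_map_inverse:
  assumes g: "ONF g0 g1 g2" and h: "ONF h0 h1 h2"
  shows "frame_map h0 h1 h2 g0 g1 g2 (frame_map g0 g1 g2 h0 h1 h2 x) = x"
  unfolding frame_map_def using ONF_lor[OF h] ONF_expansion[OF g, of x] by (simp add: lor_lin)

text \<open>A frame map preserves the future cone, hence the hyperboloid.\<close>

lemma frame_map_hyp:
  assumes g: "ONF g0 g1 g2" and h: "ONF h0 h1 h2" and x: "x \<in> hyp"
  shows "frame_map g0 g1 g2 h0 h1 h2 x \<in> hyp"
proof -
  let ?y = "frame_map g0 g1 g2 h0 h1 h2 x"
  have yy: "lor ?y ?y = -1" using frame_map_lor[OF g h, of x x] x unfolding hyp_def by simp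
  have "lor ?y h0 = lor x g0" unfolding frame_map_def by (simp add: lor_lin ONF_lor[OF h])
  also have "\<dots> < 0" using hyp_lor_neg[OF x] g unfolding ONF_def hyp_def by simp
  finally have "thd ?y > 0"
    using timelike_lor_sign[of ?y h0] yy ONF_lor[OF h] by simp
  with yy show ?thesis unfolding hyp_def by simp
qed

lemma frame_map_eqI:
  assumes h: "ONF h0 h1 h2"
    and "lor V g0 = lor U h0" "lor V g1 = lor U h1" "lor V g2 = lor U h2"
  shows "frame_map g0 g1 g2 h0 h1 h2 V = U"
  unfolding frame_map_def using assms ONF_expansion[OF h, of U] by simp

section \<open>Isometries of the hyperbolic plane\<close>

text \<open>A linear Lorentz transformation A with inverse B preserving the hyperboloid.  Every
  notion entering the generalized edge length is transported by such a map.\<close>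

locale lorentz_iso =
  fixes A B :: "v3 \<Rightarrow> v3"
  assumes lor_A: "lor (A x) (A y) = lor x y"
    and hyp_A: "x \<in> hyp \<Longrightarrow> A x \<in> hyp"
    and hyp_B: "x \<in> hyp \<Longrightarrow> B x \<in> hyp"
    and B_A: "B (A x) = x"
    and A_B: "A (B x) = x"
    and lin_A: "A (a *\<^sub>R x + b *\<^sub>R y) = a *\<^sub>R A x + b *\<^sub>R A y"
begin

lemma lor_B_A: "lor (B y) x = lor y (A x)"
  by (metis lor_A A_B)

lemma lin_B: "B (a *\<^sub>R x + b *\<^sub>R y) = a *\<^sub>R B x + b *\<^sub>R B y"
  by (metis lin_A A_B B_A)

lemma inj_A: "inj A"
  by (metis B_A injI)

lemma image_eqI_inverse:
  assumes "\<And>x. x \<in> S \<Longrightarrow> A x \<in> T" "\<And>y. y \<in> T \<Longrightarrow> B y \<in> S"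
  shows "T = A ` S"
proof
  show "A ` S \<subseteq> T" using assms by auto
  show "T \<subseteq> A ` S"
  proof
    fix y assume "y \<in> T"
    then have "B y \<in> S" by (rule assms(2))
    then show "y \<in> A ` S" by (metis A_B image_eqI)
  qed
qed

lemma lor_set_image: "{x \<in> hyp. P (lor x (A V))} = A ` {x \<in> hyp. P (lor x V)}"
  by (rule image_eqI_inverse) (auto simp: hyp_A hyp_B lor_A lor_B_A)

lemma Bset_image: "Bset t (A V) = A ` Bset t V"
  unfolding Bset_def using lor_set_image[of "\<lambda>r. - r \<le> 1" V] lor_set_image[of "\<lambda>r. r \<ge> 0" V]
  by simp

lemma Bbdry_image: "Bbdry t (A V) = A ` Bbdry t V"
  unfolding Bbdry_def using lor_set_image[of "\<lambda>r. - r = 1" V] lor_set_image[of "\<lambda>r. r = 0" V]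
  by simp

lemma hline_image: "hline (A U) (A W) = A ` hline U W"
  unfolding hline_def
proof (rule image_eqI_inverse)
  fix x assume "x \<in> {x \<in> hyp. \<exists>a b. x = a *\<^sub>R U + b *\<^sub>R W}"
  then show "A x \<in> {x \<in> hyp. \<exists>a b. x = a *\<^sub>R A U + b *\<^sub>R A W}" using hyp_A lin_A by blast
next
  fix y assume "y \<in> {x \<in> hyp. \<exists>a b. x = a *\<^sub>R A U + b *\<^sub>R A W}"
  then obtain a b where y: "y \<in> hyp" "y = a *\<^sub>R A U + b *\<^sub>R A W" by blast
  then have "B y = a *\<^sub>R U + b *\<^sub>R W" by (simp add: lin_B B_A)
  then show "B y \<in> {x \<in> hyp. \<exists>a b. x = a *\<^sub>R U + b *\<^sub>R W}" using hyp_B[OF y(1)] by blast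
qed

lemma hdist_image: "hdist (A x) (A y) = hdist x y"
  unfolding hdist_def by (simp add: lor_A)

lemma hsetdist_image: "hsetdist (A ` S) (A ` T) = hsetdist S T"
proof -
  have "{hdist x y | x y. x \<in> A ` S \<and> y \<in> A ` T} = {hdist x y | x y. x \<in> S \<and> y \<in> T}"
    (is "?L = ?R")
  proof
    show "?L \<subseteq> ?R" using hdist_image by blast
    show "?R \<subseteq> ?L" using hdist_image[symmetric] by blast
  qed
  then show ?thesis unfolding hsetdist_def by simp
qed

lemma glen_image:
  assumes "Bset t U \<inter> Bset s W \<noteq> {} \<Longrightarrow>
     (\<exists>!x. x \<in> Bbdry t U \<inter> hline U W) \<and> (\<exists>!y. y \<in> Bbdry s W \<inter> hline U W)"
  shows "glen t (A U) s (A W) = glen t U s W"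
proof -
  have Int: "A ` X \<inter> A ` Y = A ` (X \<inter> Y)" for X Y
    using inj_A by (simp add: image_Int)
  have The: "(THE x. x \<in> A ` S) = A (THE x. x \<in> S)" if "\<exists>!x. x \<in> S" for S
  proof -
    from that obtain x0 where "x0 \<in> S" "\<forall>y\<in>S. y = x0" by blast
    then have "S = {x0}" by blast
    then show ?thesis by simp
  qed
  show ?thesis
  proof (cases "Bset t U \<inter> Bset s W = {}")
    case True
    then show ?thesis unfolding glen_def Bset_image Int hsetdist_image by simp
  next
    case False
    then show ?thesis using assms unfolding glen_def Bset_image Bbdry_image hline_image Int
      by (simp add: The hdist_image)
  qed
qed

end

lemma frame_map_linear:
  "frame_map g0 g1 g2 h0 h1 h2 (a *\<^sub>R x + b *\<^sub>R y) =
     a *\<^sub>R frame_map g0 g1 g2 h0 h1 h2 x + b *\<^sub>R frame_map g0 g1 g2 h0 h1 h2 y"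
  unfolding frame_map_def by (simp add: lor_lin algebra_simps)

lemma lorentz_iso_frame_map:
  assumes g: "ONF g0 g1 g2" and h: "ONF h0 h1 h2"
  shows "lorentz_iso (frame_map g0 g1 g2 h0 h1 h2) (frame_map h0 h1 h2 g0 g1 g2)"
  by unfold_locales
    (simp_all add: frame_map_lor[OF g h] frame_map_hyp[OF g h] frame_map_hyp[OF h g]
      frame_map_inverse[OF g h] frame_map_inverse[OF h g] frame_map_linear)

fun lcross :: "v3 \<Rightarrow> v3 \<Rightarrow> v3" where
  "lcross (a1, a2, a3) (b1, b2, b3) = (a2*b3 - a3*b2, a3*b1 - a1*b3, a2*b1 - a1*b2)"

lemma lcross_orthogonal: "lor a (lcross a b) = 0" "lor b (lcross a b) = 0"
  and lcross_norm: "lor (lcross a b) (lcross a b) = (lor a b)^2 - lor a a * lor b b"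
proof -
  obtain a1 a2 a3 where a: "a = (a1,a2,a3)" by (cases a rule: prod_cases3)
  obtain b1 b2 b3 where b: "b = (b1,b2,b3)" by (cases b rule: prod_cases3)
  show "lor a (lcross a b) = 0" "lor b (lcross a b) = 0"
    "lor (lcross a b) (lcross a b) = (lor a b)^2 - lor a a * lor b b"
    unfolding a b by (simp; algebra)+
qed

definition unit_vec :: "v3 \<Rightarrow> v3" where
  "unit_vec x = (1 / sqrt \<bar>lor x x\<bar>) *\<^sub>R x"

lemma lor_unit_vec: "lor y (unit_vec x) = lor y x / sqrt \<bar>lor x x\<bar>"
  unfolding unit_vec_def by (simp add: lor_scale_r)

lemma lor_unit_vec_self:
  assumes "lor x x \<noteq> 0"
  shows "lor (unit_vec x) (unit_vec x) = sgn (lor x x)"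
proof -
  have "lor (unit_vec x) (unit_vec x) = lor x x / (sqrt \<bar>lor x x\<bar> * sqrt \<bar>lor x x\<bar>)"
    unfolding unit_vec_def by (simp add: lor_scale_l lor_scale_r)
  also have "\<dots> = sgn (lor x x)" using assms by (simp add: sgn_if)
  finally show ?thesis .
qed

lemma pair_frame_ONF:
  assumes VV: "lor V V = q" and WW: "lor W W = q"
    and qc: "q + lor V W < 0" "q - lor V W > 0" and th: "thd (V + W) > 0"
  shows "ONF (unit_vec (V + W)) (unit_vec (V - W)) (unit_vec (lcross V W))"
proof -
  let ?s = "V + W" and ?t = "V - W" and ?n = "lcross V W"
  have WV: "lor W V = lor V W" by (rule lor_sym)
  have s: "lor ?s ?s = 2*q + 2*lor V W" and t: "lor ?t ?t = 2*q - 2*lor V W"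
    and st: "lor ?s ?t = 0" by (simp_all add: lor_lin VV WW WV)
  have n: "lor ?n ?n = (lor V W - q) * (lor V W + q)"
    unfolding lcross_norm VV WW by (simp add: power2_eq_square algebra_simps)
  have sn: "lor ?s ?n = 0" and tn: "lor ?t ?n = 0"
    by (simp_all add: lor_lin lcross_orthogonal)
  have signs: "lor ?s ?s < 0" "lor ?t ?t > 0" "lor ?n ?n > 0"
    using qc unfolding s t n by (auto intro: mult_neg_neg)
  have "thd (unit_vec ?s) > 0" unfolding unit_vec_def thd_scale using th signs by simp
  moreover have "lor (unit_vec x) (unit_vec y) = 0" if "lor x y = 0" for x y
    using that unfolding unit_vec_def by (simp add: lor_scale_l lor_scale_r)
  ultimately show ?thesis
    unfolding ONF_def using signs st sn tn by (simp add: lor_unit_vec_self)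
qed

lemma pair_congruent:
  assumes VV: "lor V V = q" and WW: "lor W W = q" and UU: "lor U U = q" and XX: "lor X X = q"
    and c: "lor U X = lor V W" and qc: "q + lor V W < 0" "q - lor V W > 0"
    and th: "thd (V + W) > 0" "thd (U + X) > 0"
  obtains A B where "lorentz_iso A B" "A V = U" "A W = X"
proof -
  let ?g0 = "unit_vec (V + W)" and ?g1 = "unit_vec (V - W)" and ?g2 = "unit_vec (lcross V W)"
  let ?h0 = "unit_vec (U + X)" and ?h1 = "unit_vec (U - X)" and ?h2 = "unit_vec (lcross U X)"
  have g: "ONF ?g0 ?g1 ?g2" using pair_frame_ONF[OF VV WW qc th(1)] .
  have h: "ONF ?h0 ?h1 ?h2" using pair_frame_ONF[OF UU XX qc[folded c] th(2)] .
  have sym: "lor W V = lor V W" "lor X U = lor U X" by (simp_all add: lor_sym)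
  let ?A = "frame_map ?g0 ?g1 ?g2 ?h0 ?h1 ?h2"
  have "?A V = U" "?A W = X"
    by (rule frame_map_eqI[OF h];
        simp add: lor_unit_vec lor_lin lcross_orthogonal VV WW UU XX c sym)+
  with lorentz_iso_frame_map[OF g h] show ?thesis by (rule that)
qed

section \<open>Sides joining two vertices of the same type\<close>

text \<open>For vertices of type 0 or -1 the Lorentz norm is \<open>q \<ge> 0\<close>.\<close>

definition qv :: "int \<Rightarrow> real" where
  "qv e = (if e = 0 then 0 else 1)"

lemma vtx_ok_iff: "e \<in> {0, -1} \<Longrightarrow> vtx_ok e V \<longleftrightarrow> thd V > 0 \<and> lor V V = qv e"
  unfolding vtx_ok_def qv_def by auto

lemma qv_nonneg: "qv e \<ge> 0"
  unfolding qv_def by simp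

text \<open>Two future vectors of equal norm \<open>q \<ge> 0\<close> span a segment meeting the hyperbolic plane
  exactly when their sum is time-like, i.e. \<open>q + lor V W < 0\<close>.\<close>

lemma hseg_nonempty_iff:
  assumes VV: "lor V V = q" and WW: "lor W W = q" and q: "q \<ge> 0"
    and tV: "thd V > 0" and tW: "thd W > 0"
  shows "hseg V W \<noteq> {} \<longleftrightarrow> q + lor V W < 0"
proof
  assume "hseg V W \<noteq> {}"
  then obtain x a b where x: "x \<in> hyp" "a \<ge> 0" "b \<ge> 0" "x = a *\<^sub>R V + b *\<^sub>R W"
    unfolding hseg_def by blast
  have norm: "a^2 * q + b^2 * q + 2*a*b * lor V W = -1"
    using x lor_comb[of a V b W] VV WW unfolding hyp_def by simp
  show "q + lor V W < 0"
  proof (rule ccontr)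
    assume "\<not> q + lor V W < 0"
    then have "2*a*b * lor V W \<ge> 2*a*b * (-q)" using x(2,3) by (intro mult_left_mono) auto
    moreover have "a^2*q + b^2*q - 2*a*b*q = q * (a - b)^2"
      by (simp add: power2_eq_square algebra_simps)
    moreover have "q * (a - b)^2 \<ge> 0" using q by simp
    ultimately show False using norm by linarith
  qed
next
  assume qc: "q + lor V W < 0"
  define a where "a = 1 / sqrt (-(2*q + 2*lor V W))"
  have a: "a > 0" "a^2 = 1 / (-(2*q + 2*lor V W))"
    using qc unfolding a_def by (simp_all add: power_divide)
  have "lor (a *\<^sub>R V + a *\<^sub>R W) (a *\<^sub>R V + a *\<^sub>R W) = -1"
    unfolding lor_comb VV WW using qc a by (simp add: field_simps power2_eq_square)
  moreover have "thd (a *\<^sub>R V + a *\<^sub>R W) > 0"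
    using a tV tW by (simp add: thd_add thd_scale add_pos_pos)
  moreover have "\<exists>a' b. a' \<ge> 0 \<and> b \<ge> 0 \<and> a *\<^sub>R V + a *\<^sub>R W = a' *\<^sub>R V + b *\<^sub>R W"
    using a by (intro exI[of _ a]) auto
  ultimately have "a *\<^sub>R V + a *\<^sub>R W \<in> hseg V W"
    unfolding hseg_def hyp_def by blast
  then show "hseg V W \<noteq> {}" by blast
qed

text \<open>On the line through two ideal vertices, the boundary horocycle of each horodisk is met
  in exactly one point, so the feet used by the generalized length are well defined.\<close>

lemma horocycle_foot_unique:
  assumes UU: "lor U U = 0" and WW: "lor W W = 0" and c: "lor U W < 0"
    and tU: "thd U > 0" and tW: "thd W > 0"
  shows "\<exists>!x. x \<in> Bbdry 0 U \<inter> hline U W"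
proof (rule ex1I)
  have WU: "lor W U = lor U W" by (rule lor_sym)
  let ?x = "(1/2) *\<^sub>R U + (-1 / lor U W) *\<^sub>R W"
  have "(-1 / lor U W) * thd W > 0" using c tW by (simp add: divide_pos_neg)
  then have "thd ?x > 0" using tU unfolding thd_add thd_scale by linarith
  moreover have "lor ?x ?x = -1" unfolding lor_comb UU WW using c by (simp add: field_simps)
  moreover have "- lor ?x U = 1" using c by (simp add: lor_lin UU WU)
  moreover have "\<exists>a b. ?x = a *\<^sub>R U + b *\<^sub>R W" by blast
  ultimately show "?x \<in> Bbdry 0 U \<inter> hline U W"
    unfolding Bbdry_def hline_def hyp_def by simp
  fix y assume "y \<in> Bbdry 0 U \<inter> hline U W"
  then obtain a b where y: "y \<in> hyp" "- lor y U = 1" "y = a *\<^sub>R U + b *\<^sub>R W"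
    unfolding Bbdry_def hline_def by auto
  have "- (b * lor U W) = 1" using y(2,3) by (simp add: lor_lin UU WU)
  then have b: "b = -1 / lor U W" using c by (simp add: field_simps)
  have "2*a*b * lor U W = -1" using y(1,3) unfolding hyp_def by (simp add: lor_comb UU WW)
  then have "a = 1/2" using b c by (simp add: field_simps)
  then show "y = ?x" using y(3) b by simp
qed

lemma hline_sym: "hline U W = hline W U"
  unfolding hline_def by (rule Collect_cong) (metis add.commute)

definition gside :: "int \<Rightarrow> v3 \<Rightarrow> v3 \<Rightarrow> bool" where
  "gside e V W = (vtx_ok e V \<and> vtx_ok e W \<and> hseg V W \<noteq> {} \<and>
     (e \<noteq> 0 \<longrightarrow> Bset e V \<inter> Bset e W = {}))"

lemma gside_lor_bound:
  assumes e: "e \<in> {0, -1}" and side: "gside e V W"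
  shows "qv e + lor V W < 0"
proof -
  have "thd V > 0" "lor V V = qv e" "thd W > 0" "lor W W = qv e" "hseg V W \<noteq> {}"
    using side vtx_ok_iff[OF e] unfolding gside_def by auto
  then show ?thesis using hseg_nonempty_iff qv_nonneg by blast
qed

lemma gside_congruent:
  assumes e: "e \<in> {0, -1}" and side: "gside e V W"
    and U: "vtx_ok e U" and X: "vtx_ok e X" and c: "lor U X = lor V W"
  shows "gside e U X" "glen e U e X = glen e V e W"
proof -
  let ?q = "qv e"
  have V: "thd V > 0" "lor V V = ?q" and W: "thd W > 0" "lor W W = ?q"
    and U': "thd U > 0" "lor U U = ?q" and X': "thd X > 0" "lor X X = ?q"
    using side U X vtx_ok_iff[OF e] unfolding gside_def by auto
  have qc: "?q + lor V W < 0" using gside_lor_bound[OF e side] .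
  then have qc': "?q - lor V W > 0" using qv_nonneg[of e] by linarith
  have "thd (V + W) > 0" "thd (U + X) > 0"
    using V(1) W(1) U'(1) X'(1) by (simp_all add: thd_add)
  then obtain A B where iso: "lorentz_iso A B" and AV: "A V = U" and AW: "A W = X"
    by (rule pair_congruent[OF V(2) W(2) U'(2) X'(2) c qc qc'])
  have "Bset e U \<inter> Bset e X = A ` (Bset e V \<inter> Bset e W)"
    unfolding AV[symmetric] AW[symmetric] lorentz_iso.Bset_image[OF iso]
    by (simp add: image_Int lorentz_iso.inj_A[OF iso])
  moreover have "hseg U X \<noteq> {}"
    using hseg_nonempty_iff[OF U'(2) X'(2) qv_nonneg U'(1) X'(1)] qc c by simp
  ultimately show "gside e U X" using side U X unfolding gside_def by auto
  have "glen e (A V) e (A W) = glen e V e W"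
  proof (rule lorentz_iso.glen_image[OF iso])
    assume "Bset e V \<inter> Bset e W \<noteq> {}"
    then have "e = 0" using side unfolding gside_def by blast
    then have "lor V V = 0" "lor W W = 0" "lor V W < 0" "lor W V < 0"
      using V W qc by (simp_all add: qv_def lor_sym[of W V])
    then show "(\<exists>!x. x \<in> Bbdry e V \<inter> hline V W) \<and> (\<exists>!y. y \<in> Bbdry e W \<inter> hline V W)"
      using horocycle_foot_unique[of V W] horocycle_foot_unique[of W V] V W \<open>e = 0\<close>
      by (simp add: hline_sym[of W V])
  qed
  then show "glen e U e X = glen e V e W" using AV AW by simp
qed

lemma hdist_sym: "hdist x y = hdist y x"
  unfolding hdist_def by (simp add: lor_sym)

lemma hsetdist_sym: "hsetdist S T = hsetdist T S"
proof -
  have "{hdist x y | x y. x \<in> S \<and> y \<in> T} = {hdist x y | x y. x \<in> T \<and> y \<in> S}"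
    using hdist_sym by blast
  then show ?thesis unfolding hsetdist_def by simp
qed

lemma glen_sym: "glen t U s W = glen s W t U"
proof -
  have "Bset s W \<inter> Bset t U = Bset t U \<inter> Bset s W" by blast
  then show ?thesis
    by (simp only: glen_def hline_sym[of W U] hsetdist_sym[of "Bset s W"]
      hdist_sym[of "THE x. x \<in> Bbdry s W \<inter> hline U W"])
qed

lemma gangle_sym: "gangle t V W1 W2 = gangle t V W2 W1"
proof -
  let ?T1 = "W1 + lor W1 V *\<^sub>R V" and ?T2 = "W2 + lor W2 V *\<^sub>R V"
  show ?thesis
    unfolding gangle_def Let_def
    by (simp only: lor_sym[of ?T1 ?T2] mult.commute[of "lor ?T1 ?T1" "lor ?T2 ?T2"]
      hdist_sym[of "THE x. x \<in> Bbdry 0 V \<inter> hline V W1"] hsetdist_sym[of "hline V W1"])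
qed

lemma hseg_sym: "hseg U W = hseg W U"
  unfolding hseg_def by (rule Collect_cong) (metis add.commute)

lemma det3_swap: "det3 V2 V1 V3 = - det3 V1 V2 V3"
  by (cases V1 rule: prod_cases3; cases V2 rule: prod_cases3; cases V3 rule: prod_cases3)
    (simp add: algebra_simps)

lemma gtri_swap: "gtri e e d V1 V2 V3 \<Longrightarrow> gtri e e d V2 V1 V3"
  unfolding gtri_def using det3_swap[of V2 V1 V3] hseg_sym[of V2 V1]
  by (simp add: Int_commute[of "Bset e V2"])

lemma gside_of_gtri: "gtri e e d V1 V2 V3 \<Longrightarrow> gside e V1 V2"
  unfolding gtri_def gside_def by blast

lemma third_side_of_Dset:
  assumes ab: "(a, b) \<in> Dset e d th" and ba: "(b, a) \<in> Dset e d th"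
  obtains V W where "gside e V W"
    "third_side e d th a b (glen e V e W)" "third_side e d th b a (glen e V e W)"
proof -
  obtain V1 V2 V3 where t: "gtri e e d V1 V2 V3" "glen e V1 d V3 = a" "glen e V2 d V3 = b"
    "gangle d V3 V1 V2 = th"
    using ab unfolding Dset_def by blast
  have "tri_data e d th a b (glen e V1 e V2)"
    unfolding tri_data_def using t by blast
  moreover have "tri_data e d th b a (glen e V1 e V2)"
    unfolding tri_data_def using gtri_swap[OF t(1)] t(2-4) gangle_sym glen_sym[of e V1 e V2]
    by metis
  ultimately show ?thesis
    using that gside_of_gtri[OF t(1)] ab ba unfolding third_side_def by blast
qed

section \<open>Triangles with prescribed Lorentz products\<close>

text \<open>Three future light-like vectors with arbitrary negative pairwise products: the ideal
  points 1, -1 and i of the unit circle, suitably scaled.\<close>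

lemma lightlike_triple:
  fixes c1 c2 c3 :: real
  assumes "c1 < 0" "c2 < 0" "c3 < 0"
  shows "\<exists>U1 U2 U3. thd U1 > 0 \<and> thd U2 > 0 \<and> thd U3 > 0 \<and> lor U1 U1 = 0 \<and> lor U2 U2 = 0 \<and> lor U3 U3 = 0
    \<and> lor U2 U3 = c1 \<and> lor U1 U3 = c2 \<and> lor U1 U2 = c3 \<and> det3 U1 U2 U3 \<noteq> 0"
proof -
  define m1 m2 m3 where "m1 = -c1" "m2 = -c2" "m3 = -c3/2"
  have mp: "m1 > 0" "m2 > 0" "m3 > 0" using assms unfolding m1_m2_m3_def by auto
  define l1 where "l1 = sqrt (m2*m3/m1)"
  have l1p: "l1 > 0" using mp unfolding l1_def by simp
  have l1s: "l1 * l1 = m2*m3/m1" unfolding l1_def using mp by simp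
  define l2 l3 where "l2 = m3 / l1" "l3 = m2 / l1"
  have l23: "l2 > 0" "l3 > 0" using mp l1p unfolding l2_l3_def by auto
  have e1: "l2 * l3 = m1" unfolding l2_l3_def using l1s mp l1p by (simp add: field_simps)
  have e2: "l1 * l3 = m2" "l1 * l2 = m3" unfolding l2_l3_def using l1p by auto
  let ?U1 = "(l1, 0::real, l1)" and ?U2 = "(-l2, 0::real, l2)" and ?U3 = "(0::real, l3, l3)"
  have "lor ?U2 ?U3 = c1" using e1 unfolding m1_m2_m3_def by simp
  moreover have "lor ?U1 ?U3 = c2" using e2 unfolding m1_m2_m3_def by simp
  moreover have "lor ?U1 ?U2 = c3" using e2 unfolding m1_m2_m3_def by (simp add: mult.commute)
  moreover have "det3 ?U1 ?U2 ?U3 \<noteq> 0" using l1p l23 by simp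
  ultimately show ?thesis using l1p l23 by (intro exI[of _ ?U1] exI[of _ ?U2] exI[of _ ?U3]) simp
qed

text \<open>Three future space-like unit vectors with arbitrary pairwise products below -1: two
  symmetric vectors in the (x1, x3)-plane with product c3, and a third one solving two
  linear conditions.\<close>

lemma spacelike_triple:
  fixes c1 c2 c3 :: real
  assumes c1: "c1 < -1" and c2: "c2 < -1" and c3: "c3 < -1"
  shows "\<exists>U1 U2 U3. thd U1 > 0 \<and> thd U2 > 0 \<and> thd U3 > 0 \<and> lor U1 U1 = 1 \<and> lor U2 U2 = 1 \<and> lor U3 U3 = 1
    \<and> lor U2 U3 = c1 \<and> lor U1 U3 = c2 \<and> lor U1 U2 = c3 \<and> det3 U1 U2 U3 \<noteq> 0"
proof -
  define C S where "C = sqrt ((1-c3)/2)" "S = sqrt ((-1-c3)/2)"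
  have Cp: "C > 0" "S > 0" using c3 unfolding C_S_def by auto
  have CC: "C*C = (1-c3)/2" "S*S = (-1-c3)/2" using c3 unfolding C_S_def by auto
  define z x where "z = -(c1+c2)/(2*S)" "x = (c2-c1)/(2*C)"
  have zp: "z > 0" using Cp c1 c2 unfolding z_x_def by (simp add: divide_pos_pos)
  have zx: "z^2 \<ge> x^2"
  proof -
    have "(c1-c2)^2 \<le> (c1+c2)^2"
    proof -
      have "(c1+c2)^2 - (c1-c2)^2 = 4*(c1*c2)" by (simp add: power2_eq_square algebra_simps)
      moreover have "c1*c2 > 0" using c1 c2 by (simp add: mult_neg_neg)
      ultimately show ?thesis by linarith
    qed
    have SC: "S*S \<le> C*C" using CC by simp
    have "x^2 = (c1-c2)^2 / (4*(C*C))" unfolding z_x_def by (simp add: power2_eq_square algebra_simps)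
    also have "\<dots> \<le> (c1-c2)^2 / (4*(S*S))"
      using SC Cp by (intro divide_left_mono) (auto intro: mult_pos_pos)
    also have "\<dots> \<le> (c1+c2)^2 / (4*(S*S))"
      using \<open>(c1-c2)^2 \<le> (c1+c2)^2\<close> Cp by (intro divide_right_mono) auto
    also have "\<dots> = z^2" unfolding z_x_def by (simp add: power2_eq_square algebra_simps)
    finally show ?thesis .
  qed
  define y where "y = sqrt (1 + z^2 - x^2)"
  have yp: "y > 0" using zx unfolding y_def by simp
  have yy: "y*y = 1 + z^2 - x^2" using zx unfolding y_def by simp
  let ?U1 = "(C, 0::real, S)" and ?U2 = "(-C, 0::real, S)" and ?U3 = "(x, y, z)"
  have "lor ?U1 ?U1 = 1" using CC by simp
  moreover have "lor ?U2 ?U2 = 1" using CC by simp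
  moreover have "lor ?U3 ?U3 = 1" using yy by (simp add: power2_eq_square)
  moreover have "lor ?U1 ?U2 = c3" using CC by simp
  moreover have "C * x = (c2-c1)/2" "S * z = -(c1+c2)/2" unfolding z_x_def using Cp by auto
  then have "lor ?U1 ?U3 = c2" "lor ?U2 ?U3 = c1" by (simp_all add: field_simps)
  moreover have "det3 ?U1 ?U2 ?U3 \<noteq> 0" using Cp yp by simp
  ultimately show ?thesis using Cp zp by (intro exI[of _ ?U1] exI[of _ ?U2] exI[of _ ?U3]) simp
qed

lemma vertex_triple:
  assumes e: "e \<in> {0, -1}" and c: "qv e + c1 < 0" "qv e + c2 < 0" "qv e + c3 < 0"
  obtains U1 U2 U3 where "vtx_ok e U1" "vtx_ok e U2" "vtx_ok e U3"
    "lor U2 U3 = c1" "lor U1 U3 = c2" "lor U1 U2 = c3" "det3 U1 U2 U3 \<noteq> 0"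
proof (cases "e = 0")
  case True
  then show ?thesis
    using that lightlike_triple[of c1 c2 c3] c vtx_ok_iff[OF e] unfolding qv_def by auto
next
  case False
  then show ?thesis
    using that spacelike_triple[of c1 c2 c3] c vtx_ok_iff[OF e] unfolding qv_def by auto
qed

lemma gtri_of_gsides:
  assumes "gside e U1 U2" "gside e U2 U3" "gside e U1 U3" "det3 U1 U2 U3 \<noteq> 0"
  shows "gtri e e e U1 U2 U3"
  using assms unfolding gside_def gtri_def by blast

text \<open>The essential inclusion: compatible side data for the three angles determine third
  sides l1, l2, l3, and these are the edge lengths of one triangle of type (e,e,e), because
  each l_k only depends on the Lorentz product of the endpoints of the third side.\<close>

lemma Mset_of_Dset:
  assumes e: "e \<in> {0, -1}"
    and J: "r1 \<in> Jset (e * d)" "r2 \<in> Jset (e * d)" "r3 \<in> Jset (e * d)"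
    and D: "(r2, r3) \<in> Dset e d p1" "(r3, r2) \<in> Dset e d p1"
           "(r1, r3) \<in> Dset e d p2" "(r3, r1) \<in> Dset e d p2"
           "(r1, r2) \<in> Dset e d p3" "(r2, r1) \<in> Dset e d p3"
  shows "(r1, r2, r3) \<in> Mset e d p1 p2 p3"
proof -
  obtain V1 W1 where s1: "gside e V1 W1"
    "third_side e d p1 r2 r3 (glen e V1 e W1)" "third_side e d p1 r3 r2 (glen e V1 e W1)"
    using third_side_of_Dset[OF D(1,2)] .
  obtain V2 W2 where s2: "gside e V2 W2"
    "third_side e d p2 r1 r3 (glen e V2 e W2)" "third_side e d p2 r3 r1 (glen e V2 e W2)"
    using third_side_of_Dset[OF D(3,4)] .
  obtain V3 W3 where s3: "gside e V3 W3"
    "third_side e d p3 r1 r2 (glen e V3 e W3)" "third_side e d p3 r2 r1 (glen e V3 e W3)"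
    using third_side_of_Dset[OF D(5,6)] .
  obtain U1 U2 U3 where U: "vtx_ok e U1" "vtx_ok e U2" "vtx_ok e U3"
    "lor U2 U3 = lor V1 W1" "lor U1 U3 = lor V2 W2" "lor U1 U2 = lor V3 W3" "det3 U1 U2 U3 \<noteq> 0"
    using vertex_triple[OF e gside_lor_bound[OF e s1(1)] gside_lor_bound[OF e s2(1)]
        gside_lor_bound[OF e s3(1)]] .
  note side23 = gside_congruent[OF e s1(1) U(2,3,4)]
  note side13 = gside_congruent[OF e s2(1) U(1,3,5)]
  note side12 = gside_congruent[OF e s3(1) U(1,2,6)]
  have "gtri e e e U1 U2 U3"
    using gtri_of_gsides side12(1) side23(1) side13(1) U(7) .
  then show ?thesis
    unfolding Mset_def mem_Collect_eq prod.case
    using J s1(2,3) s2(2,3) s3(2,3) side12(2) side23(2) side13(2) by blast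
qed

text \<open>Lemma 4.1.  The inclusion of M into the set on the right is immediate from the
  definitions; the converse is the lemma above.\<close>

theorem lemma4p1:
  fixes e d :: int and p1 p2 p3 :: real
  assumes "e \<in> {0, -1}" and "d \<in> {-1, 0, 1}"
    and "p1 \<in> Iint d" and "p2 \<in> Iint d" and "p3 \<in> Iint d"
  shows "Mset e d p1 p2 p3 = {(r1, r2, r3).
           r1 \<in> Jset (e * d) \<and> r2 \<in> Jset (e * d) \<and> r3 \<in> Jset (e * d) \<and>
           (r2, r3) \<in> Dset e d p1 \<and> (r3, r2) \<in> Dset e d p1 \<and>
           (r1, r3) \<in> Dset e d p2 \<and> (r3, r1) \<in> Dset e d p2 \<and>
           (r1, r2) \<in> Dset e d p3 \<and> (r2, r1) \<in> Dset e d p3}"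
proof (rule equalityI, goal_cases)
  case 1
  show ?case unfolding Mset_def third_side_def by auto
next
  case 2
  show ?case using Mset_of_Dset[OF assms(1)] by auto
qed

end
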